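(* Let $\alpha:X\to\mathbb PLX$ be a measurable map (a continuous probabilistic transition system). Let $\tilde\alpha^\#=\langle\tilde\alpha^\#_1,\tilde\alpha^\#_*,a\mapsto\tau_a\rangle:\mathbb DX\to F\mathbb DX$ be given by $$\tilde\alpha^\#_1(m)=\int_X\alpha(-)(LX)\,dm,\quad \tilde\alpha^\#_*(m)=\int_X\alpha(-)(1)\,dm,\quad \tau_a(m)(S)=\int_X\alpha(-)(\{a\}\times S)\,dm\ (S\in\Sigma_X).$$ Then $\tilde\alpha^\#$ satisfies $\tilde\alpha^\#_1(m)=\tilde\alpha^\#_*(m)+\sum_{a\in A}\tilde\alpha^\#_1(\tau_a(m))$ for all $m\in\mathbb DX$, so there is a unique $F$-coalgebra morphism $[\![-]\!]:\mathbb DX\to\mathbb DA^\infty$ from $\tilde\alpha^\#$ to $\Pi$. Writing $\langle\!\langle x\rangle\!\rangle=[\![\eta_X(x)]\!]$ for $x\in X$, we have for all $m\in\mathbb DX$ and all $S\in S_\infty$: $$[\![m]\!](S)=\int_X\langle\!\langle -\rangle\!\rangle(S)\,dm.$$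
   Context: Work in $\mathbf{Meas}$. $\mathbb I=[0,1]$; $A$ finite alphabet (discrete $\sigma$-algebra); $1=\{*\}$. $LX=A\times X+1$ with $\sigma$-algebra $(\mathcal P(A)\otimes\Sigma_X)\oplus\mathcal P(1)$. For a measurable space $X$, $\mathbb DX$ is the set of sub-probability measures on $X$ and $\mathbb PX\subseteq\mathbb DX$ the probability measures, both with the $\sigma$-algebra generated by $m\mapsto m(S)$; $\eta_X(x)$ is the Dirac measure at $x$. $A^\infty=A^*\cup A^\omega$ with $\sigma$-algebra generated by $S_\infty=\{\emptyset\}\cup\{\{w\}\mid w\in A^*\}\cup\{wA^\infty\mid w\in A^*\}$ ($\varepsilon$ the empty word, $wS=\{wv\mid v\in S\}$). $F$ is the functor $FX=\mathbb I\times\mathbb I\times X^A$, $Ff=\mathrm{id}\times\mathrm{id}\times f^A$. $\Pi:\mathbb DA^\infty\to F\mathbb DA^\infty$ is $\Pi(m)=\langle m(A^\infty),m(\{\varepsilon\}),a\mapsto m_a\rangle$ with $m_a(S)=m(aS)$. An $F$-coalgebra morphism from $(Y,\beta)$ to $(\mathbb DA^\infty,\Pi)$ is a measurable $h$ with $\Pi\circ h=Fh\circ\beta$. *)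

theory Defs
  imports "HOL-Probability.Probability"
begin

text \<open>A word in A^\<infinity> is represented as an option-sequence that, once None, stays None.
  Finite words of length n are exactly those with w n = None, w k = Some _ for k < n.\<close>

type_synonym 'a inf_word = "nat \<Rightarrow> 'a option"

definition Ainf :: "'a inf_word set" where
  "Ainf = {w. \<forall>n. w n = None \<longrightarrow> w (Suc n) = None}"

definition fin_word :: "'a list \<Rightarrow> 'a inf_word" where
  "fin_word xs = (\<lambda>n. if n < length xs then Some (xs ! n) else None)"

definition wcat :: "'a list \<Rightarrow> 'a inf_word \<Rightarrow> 'a inf_word" where
  "wcat xs v = (\<lambda>n. if n < length xs then Some (xs ! n) else v (n - length xs))"

definition S_inf :: "'a inf_word set set" where
  "S_inf = {{}} \<union> {{fin_word w} | w. True} \<union> {wcat w ` Ainf | w. True}"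

definition Ainf_M :: "'a inf_word measure" where
  "Ainf_M = sigma Ainf S_inf"

section \<open>LX = A \<times> X + 1, with None playing the role of *\<close>

definition L_M :: "'x measure \<Rightarrow> ('a \<times> 'x) option measure" where
  "L_M M = sigma (Some ` (UNIV \<times> space M) \<union> {None})
     {S. S \<subseteq> Some ` (UNIV \<times> space M) \<union> {None} \<and>
         Some -` S \<in> sets (count_space UNIV \<Otimes>\<^sub>M M)}"

section \<open>The functor F X = I \<times> I \<times> X^A (unit interval values taken in ennreal)\<close>

definition F_map :: "('y \<Rightarrow> 'z) \<Rightarrow> ennreal \<times> ennreal \<times> ('a \<Rightarrow> 'y) \<Rightarrow> ennreal \<times> ennreal \<times> ('a \<Rightarrow> 'z)" where
  "F_map h t = (fst t, fst (snd t), h \<circ> snd (snd t))"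

definition is_F_morphism ::
  "'y measure \<Rightarrow> ('y \<Rightarrow> ennreal \<times> ennreal \<times> ('a \<Rightarrow> 'y)) \<Rightarrow>
   'z measure \<Rightarrow> ('z \<Rightarrow> ennreal \<times> ennreal \<times> ('a \<Rightarrow> 'z)) \<Rightarrow> ('y \<Rightarrow> 'z) \<Rightarrow> bool" where
  "is_F_morphism Y \<beta> Z \<gamma> h \<longleftrightarrow>
     h \<in> Y \<rightarrow>\<^sub>M Z \<and> (\<forall>y\<in>space Y. \<gamma> (h y) = F_map h (\<beta> y))"

definition word_deriv :: "'a inf_word measure \<Rightarrow> 'a \<Rightarrow> 'a inf_word measure" where
  "word_deriv m a = measure_of Ainf (sets (Ainf_M :: 'a inf_word measure))
     (\<lambda>S. emeasure m (wcat [a] ` S))"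

definition Pi_coalg :: "'a inf_word measure \<Rightarrow> ennreal \<times> ennreal \<times> ('a \<Rightarrow> 'a inf_word measure)" where
  "Pi_coalg m = (emeasure m Ainf, emeasure m {fin_word []}, \<lambda>a. word_deriv m a)"

definition alpha1 :: "'x measure \<Rightarrow> ('x \<Rightarrow> ('a \<times> 'x) option measure) \<Rightarrow> 'x measure \<Rightarrow> ennreal" where
  "alpha1 M \<alpha> m = (\<integral>\<^sup>+ x. emeasure (\<alpha> x) (space (L_M M :: ('a \<times> 'x) option measure)) \<partial>m)"

definition alphaStar :: "'x measure \<Rightarrow> ('x \<Rightarrow> ('a \<times> 'x) option measure) \<Rightarrow> 'x measure \<Rightarrow> ennreal" where
  "alphaStar M \<alpha> m = (\<integral>\<^sup>+ x. emeasure (\<alpha> x) {None} \<partial>m)"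

definition tau :: "'x measure \<Rightarrow> ('x \<Rightarrow> ('a \<times> 'x) option measure) \<Rightarrow> 'a \<Rightarrow> 'x measure \<Rightarrow> 'x measure" where
  "tau M \<alpha> a m = measure_of (space M) (sets M)
     (\<lambda>S. \<integral>\<^sup>+ x. emeasure (\<alpha> x) (Some ` ({a} \<times> S)) \<partial>m)"

definition alpha_sharp :: "'x measure \<Rightarrow> ('x \<Rightarrow> ('a \<times> 'x) option measure) \<Rightarrow> 'x measure
    \<Rightarrow> ennreal \<times> ennreal \<times> ('a \<Rightarrow> 'x measure)" where
  "alpha_sharp M \<alpha> m = (alpha1 M \<alpha> m, alphaStar M \<alpha> m, \<lambda>a. tau M \<alpha> a m)"

end

theory Submission
  imports Defs
begin

text \<open>Unfolding the morphism equations along a word \<open>w\<close> shows that every morphism \<open>h\<close> gives the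
  cylinder \<open>w A\<^sup>\<infinity>\<close> the mass \<open>(\<tau>\<^sub>w m)(X)\<close> and the finite word \<open>w\<close> the mass
  \<open>\<alpha>\<^sub>*(\<tau>\<^sub>w m)\<close>, where \<open>\<tau>\<^sub>w\<close> composes the \<open>\<tau>\<^sub>a\<close> along \<open>w\<close>. Cylinders and
  finite words form an intersection-stable generator, so this forces uniqueness; and since
  \<open>\<tau>\<^sub>w m = m \<bind> (\<tau>\<^sub>w \<circ> \<eta>)\<close> is linear in \<open>m\<close>, the masses of \<open>h m\<close> are the
  \<open>m\<close>-integrals of those of \<open>h (\<eta> x)\<close>. For existence, the decomposition
  \<open>\<alpha>\<^sub>1 = \<alpha>\<^sub>* + \<Sum>\<^sub>a \<alpha>\<^sub>1 \<circ> \<tau>\<^sub>a\<close> applied to \<open>\<tau>\<^sub>w m\<close> says that the prescribed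
  masses are additive, and every additive family of masses is realised by pushing Lebesgue measure
  forward along a nested family of intervals.\<close>

lemma emeasure_measure_of_image:
  assumes inj: "inj_on f (space M)"
    and image_in_sets: "\<And>S. S \<in> sets M \<Longrightarrow> f ` S \<in> sets N"
    and \<mu>: "\<And>S. S \<in> sets M \<Longrightarrow> \<mu> S = emeasure N (f ` S)"
    and S: "S \<in> sets M"
  shows "emeasure (measure_of (space M) (sets M) \<mu>) S = \<mu> S"
proof (rule emeasure_measure_of_sigma[OF sets.sigma_algebra_axioms _ _ S])
  show "positive (sets M) \<mu>"
    using \<mu> by (simp add: positive_def)
  show "countably_additive (sets M) \<mu>"
  proof (rule countably_additiveI)
    fix A :: "nat \<Rightarrow> _"
    assume A: "range A \<subseteq> sets M" "disjoint_family A" "(\<Union>i. A i) \<in> sets M"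
    have A_sets: "A i \<in> sets M" for i
      using A(1) by auto
    have "f ` A i \<inter> f ` A j = {}" if "i \<noteq> j" for i j
    proof -
      have "f ` A i \<inter> f ` A j = f ` (A i \<inter> A j)"
        using A_sets by (intro inj_on_image_Int[OF inj, symmetric] sets.sets_into_space)
      also have "A i \<inter> A j = {}"
        using A(2) that by (simp add: disjoint_family_on_def)
      finally show ?thesis by simp
    qed
    then have "(\<Sum>i. emeasure N (f ` A i)) = emeasure N (\<Union>i. f ` A i)"
      using A_sets image_in_sets by (intro suminf_emeasure) (auto simp: disjoint_family_on_def)
    then show "(\<Sum>i. \<mu> (A i)) = \<mu> (\<Union>i. A i)"
      using A(3) A_sets by (simp add: \<mu> image_UN)
  qed
qed

lemma sets_in_subprob_algebra: "m \<in> space (subprob_algebra M) \<Longrightarrow> sets m = sets M"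
  by (simp add: space_subprob_algebra)

lemma space_in_subprob_algebra: "m \<in> space (subprob_algebra M) \<Longrightarrow> space m = space M"
  by (rule sets_eq_imp_space_eq) (simp add: space_subprob_algebra)

lemma space_in_subprob_algebra_nonempty: "m \<in> space (subprob_algebra M) \<Longrightarrow> space m \<noteq> {}"
  by (simp add: space_subprob_algebra subprob_space.subprob_not_empty)

section \<open>Finite and infinite words\<close>

lemma Ainf_None_mono:
  assumes "w \<in> Ainf" "w n = None" "n \<le> k"
  shows "w k = None"
  using assms(3) by (induction k rule: dec_induct) (use assms in \<open>auto simp: Ainf_def\<close>)

lemma wcat_in_Ainf: "v \<in> Ainf \<Longrightarrow> wcat w v \<in> Ainf"
  unfolding Ainf_def wcat_def by (auto split: if_splits simp: Suc_diff_le)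

lemma fin_word_in_Ainf [simp]: "fin_word w \<in> Ainf"
  unfolding Ainf_def fin_word_def by auto

lemma wcat_Nil [simp]: "wcat [] v = v"
  by (simp add: wcat_def)

lemma wcat_image_Ainf: "wcat w ` Ainf = {v \<in> Ainf. \<forall>k<length w. v k = Some (w ! k)}"
proof safe
  fix v :: "'a inf_word"
  assume "v \<in> Ainf"
  then show "wcat w v \<in> Ainf" by (rule wcat_in_Ainf)
  show "\<And>k. k < length w \<Longrightarrow> wcat w v k = Some (w ! k)" by (simp add: wcat_def)
next
  fix v :: "'a inf_word"
  assume v: "v \<in> Ainf" and prefix: "\<forall>k<length w. v k = Some (w ! k)"
  have "(\<lambda>n. v (n + length w)) \<in> Ainf" using v by (auto simp: Ainf_def)
  moreover have "wcat w (\<lambda>n. v (n + length w)) = v"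
    using prefix by (auto simp: wcat_def fun_eq_iff)
  ultimately show "v \<in> wcat w ` Ainf" by (metis image_eqI)
qed

lemma fin_word_eq_iff:
  assumes "v \<in> Ainf"
  shows "v = fin_word w \<longleftrightarrow> (\<forall>k<length w. v k = Some (w ! k)) \<and> v (length w) = None"
proof
  assume prefix: "(\<forall>k<length w. v k = Some (w ! k)) \<and> v (length w) = None"
  show "v = fin_word w"
  proof
    fix n
    show "v n = fin_word w n"
      using prefix Ainf_None_mono[OF assms, of "length w" n]
      by (cases "n < length w") (auto simp: fin_word_def)
  qed
qed (simp add: fin_word_def)

lemma cylinder_Int:
  assumes "length w \<le> length v"
  shows "wcat w ` Ainf \<inter> wcat v ` Ainf = (if take (length w) v = w then wcat v ` Ainf else {})"
proof (cases "take (length w) v = w")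
  case True
  then have "\<forall>k<length w. v ! k = w ! k" using assms by (metis nth_take)
  then show ?thesis using True assms unfolding wcat_image_Ainf by auto
next
  case False
  then obtain k where "k < length w" "v ! k \<noteq> w ! k"
    using assms by (metis length_take min.absorb2 nth_equalityI nth_take)
  then show ?thesis using False assms unfolding wcat_image_Ainf by force
qed

lemma S_inf_cases [consumes 1, case_names empty fin_word cylinder]:
  assumes "X \<in> S_inf"
  obtains "X = {}" | w where "X = {fin_word w}" | w where "X = wcat w ` Ainf"
  using assms unfolding S_inf_def by blast

lemma S_inf_subset_Pow: "S_inf \<subseteq> Pow Ainf"
  unfolding S_inf_def using wcat_in_Ainf by auto

lemma sets_Ainf_M: "sets Ainf_M = sigma_sets Ainf S_inf"
  unfolding Ainf_M_def by (rule sets_measure_of[OF S_inf_subset_Pow])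

lemma space_Ainf_M: "space Ainf_M = Ainf"
  unfolding Ainf_M_def by (rule space_measure_of[OF S_inf_subset_Pow])

lemma cylinder_in_sets [measurable]: "wcat w ` Ainf \<in> sets Ainf_M"
  unfolding sets_Ainf_M S_inf_def by blast

lemma fin_word_in_sets [measurable]: "{fin_word w} \<in> sets Ainf_M"
  unfolding sets_Ainf_M S_inf_def by blast

lemma Ainf_in_sets [measurable]: "Ainf \<in> sets Ainf_M"
  using cylinder_in_sets[of "[]"] by simp

lemma Int_stable_S_inf: "Int_stable S_inf"
proof (rule Int_stableI)
  have cylinders: "wcat w ` Ainf \<inter> wcat v ` Ainf \<in> S_inf" for w v :: "'a list"
    using cylinder_Int[of w v] cylinder_Int[of v w]
    by (cases "length w \<le> length v") (auto simp: S_inf_def Int_commute)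
  have fin_cylinder: "{fin_word w} \<inter> wcat v ` Ainf \<in> S_inf" for w v :: "'a list"
    by (cases "fin_word w \<in> wcat v ` Ainf") (auto simp: S_inf_def)
  then have cylinder_fin: "wcat v ` Ainf \<inter> {fin_word w} \<in> S_inf" for w v :: "'a list"
    by (simp add: Int_commute)
  have fin_fin: "{fin_word w} \<inter> {fin_word v} \<in> S_inf" for w v :: "'a list"
    by (cases "w = v") (auto simp: S_inf_def)
  have empty: "{} \<in> S_inf"
    by (simp add: S_inf_def)
  fix X Y :: "'a inf_word set"
  assume X: "X \<in> S_inf" and Y: "Y \<in> S_inf"
  from X show "X \<inter> Y \<in> S_inf"
    by (cases rule: S_inf_cases; use Y in \<open>cases rule: S_inf_cases\<close>)
      (simp_all only: Int_empty_left Int_empty_right empty cylinders fin_cylinder cylinder_fin fin_fin)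
qed

lemma Ainf_measure_eqI:
  assumes "sets N = sets Ainf_M" "sets N' = sets Ainf_M" "emeasure N Ainf \<noteq> \<infinity>"
    and "\<And>X. X \<in> S_inf \<Longrightarrow> emeasure N X = emeasure N' X"
  shows "N = N'"
proof (rule measure_eqI_generator_eq[OF Int_stable_S_inf S_inf_subset_Pow, where A = "\<lambda>_. Ainf"])
  show "range (\<lambda>_. Ainf) \<subseteq> S_inf"
    unfolding S_inf_def by (auto intro!: exI[of _ "[]"])
qed (use assms in \<open>auto simp: sets_Ainf_M\<close>)

lemma wcat_single_wcat: "wcat [a] (wcat w v) = wcat (a # w) v"
  by (auto simp: wcat_def fun_eq_iff nth_Cons')

lemma wcat_Cons_image: "wcat (a # w) ` X = wcat [a] ` wcat w ` X"
  by (simp add: image_image wcat_single_wcat)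

lemma wcat_fin_word: "wcat w (fin_word v) = fin_word (w @ v)"
  by (auto simp: wcat_def fin_word_def fun_eq_iff nth_append)

lemma inj_wcat_single: "inj (wcat [a])"
proof (rule injI)
  fix v v' :: "'a inf_word"
  assume "wcat [a] v = wcat [a] v'"
  then have "wcat [a] v (Suc n) = wcat [a] v' (Suc n)" for n
    by simp
  then show "v = v'"
    by (simp add: wcat_def fun_eq_iff)
qed

lemma wcat_single_image_in_sets:
  assumes "S \<in> sets Ainf_M"
  shows "wcat [a] ` S \<in> sets Ainf_M"
  using assms unfolding sets_Ainf_M
proof (induction rule: sigma_sets.induct)
  case (Basic X)
  then have "wcat [a] ` X \<in> S_inf"
  proof (cases rule: S_inf_cases)
    case (cylinder w)
    then have "wcat [a] ` X = wcat (a # w) ` Ainf"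
      by (simp only: wcat_Cons_image[of a w Ainf])
    then show ?thesis
      unfolding S_inf_def by blast
  qed (auto simp: S_inf_def wcat_fin_word)
  then show ?case by blast
next
  case (Compl X)
  interpret S: sigma_algebra Ainf "sigma_sets Ainf S_inf"
    by (rule sigma_algebra_sigma_sets[OF S_inf_subset_Pow])
  have "wcat [a] ` (Ainf - X) = wcat [a] ` Ainf - wcat [a] ` X"
    by (rule image_set_diff[OF inj_wcat_single])
  moreover have "wcat [a] ` Ainf \<in> sigma_sets Ainf S_inf"
    using cylinder_in_sets[of "[a]"] unfolding sets_Ainf_M by simp
  ultimately show ?case
    using Compl.IH by (simp add: S.Diff)
qed (simp_all add: sigma_sets.Empty image_UN sigma_sets.Union)

lemma wcat_image_in_sets: "X \<in> sets Ainf_M \<Longrightarrow> wcat w ` X \<in> sets Ainf_M"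
proof (induction w)
  case (Cons a w)
  then show ?case
    unfolding wcat_Cons_image[of a w X] by (intro wcat_single_image_in_sets) simp
qed simp

lemma emeasure_word_deriv:
  assumes "sets N = sets Ainf_M" "S \<in> sets Ainf_M"
  shows "emeasure (word_deriv N a) S = emeasure N (wcat [a] ` S)"
  unfolding word_deriv_def space_Ainf_M[symmetric]
  by (rule emeasure_measure_of_image)
    (use assms inj_on_subset[OF inj_wcat_single subset_UNIV] wcat_single_image_in_sets in auto)

lemma sets_word_deriv [simp]: "sets (word_deriv N a) = sets Ainf_M"
  unfolding word_deriv_def
  by (simp add: sets_measure_of[OF sets.space_closed[of Ainf_M, unfolded space_Ainf_M]]
      sets.sigma_sets_eq[of Ainf_M, unfolded space_Ainf_M])

section \<open>Measures on words from nested intervals\<close>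

text \<open>A measure on words with prescribed masses \<open>P w\<close> of the cylinders \<open>w A\<^sup>\<infinity>\<close> and \<open>Q w\<close>
  of the finite words \<open>w\<close> is obtained as an image of Lebesgue measure: \<open>w\<close> is assigned an interval
  of length \<open>P w\<close>, which is split into a piece of length \<open>Q w\<close> followed by the intervals of the
  one-letter extensions \<open>w @ [a]\<close>, ordered by \<open>to_nat a\<close>. A point \<open>u\<close> is sent to the word
  whose prefixes are exactly the words whose intervals contain \<open>u\<close>.\<close>

definition interval_start :: "('a::finite list \<Rightarrow> real) \<Rightarrow> ('a list \<Rightarrow> real) \<Rightarrow> 'a list \<Rightarrow> real"
  where "interval_start P Q w =
    (\<Sum>k<length w. Q (take k w) + (\<Sum>b | to_nat b < to_nat (w ! k). P (take k w @ [b])))"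

definition word_interval :: "('a::finite list \<Rightarrow> real) \<Rightarrow> ('a list \<Rightarrow> real) \<Rightarrow> 'a list \<Rightarrow> real set"
  where "word_interval P Q w = {interval_start P Q w ..< interval_start P Q w + P w}"

definition interval_word :: "('a::finite list \<Rightarrow> real) \<Rightarrow> ('a list \<Rightarrow> real) \<Rightarrow> real \<Rightarrow> 'a inf_word"
  where "interval_word P Q u n =
    (if \<exists>w. length w = Suc n \<and> u \<in> word_interval P Q w
     then Some (last (SOME w. length w = Suc n \<and> u \<in> word_interval P Q w)) else None)"

definition word_measure :: "('a::finite list \<Rightarrow> real) \<Rightarrow> ('a list \<Rightarrow> real) \<Rightarrow> 'a inf_word measure"
  where "word_measure P Q =
    distr (restrict_space lborel (word_interval P Q [])) Ainf_M (interval_word P Q)"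

locale word_masses =
  fixes P Q :: "'a::finite list \<Rightarrow> real"
  assumes P_nonneg: "P w \<ge> 0" and Q_nonneg: "Q w \<ge> 0"
    and P_split: "P w = Q w + (\<Sum>a\<in>UNIV. P (w @ [a]))"
begin

abbreviation "I \<equiv> word_interval P Q"
abbreviation "D \<equiv> interval_word P Q"

lemma interval_start_snoc:
  "interval_start P Q (w @ [a]) =
     interval_start P Q w + Q w + (\<Sum>b | to_nat b < to_nat a. P (w @ [b]))"
  by (simp add: interval_start_def nth_append cong: sum.cong_simp)

lemma sum_smaller_letters_le:
  assumes "insert a {b. to_nat b < to_nat a} \<subseteq> B"
  shows "(\<Sum>b | to_nat b < to_nat a. P (w @ [b])) + P (w @ [a]) \<le> (\<Sum>b\<in>B. P (w @ [b]))"
proof -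
  have "(\<Sum>b | to_nat b < to_nat a. P (w @ [b])) + P (w @ [a]) =
      (\<Sum>b\<in>insert a {b. to_nat b < to_nat a}. P (w @ [b]))"
    by (simp add: add.commute)
  also have "\<dots> \<le> (\<Sum>b\<in>B. P (w @ [b]))"
    by (rule sum_mono2) (use assms P_nonneg in auto)
  finally show ?thesis .
qed

lemma word_interval_snoc_subset: "I (w @ [a]) \<subseteq> I w"
  using sum_smaller_letters_le[of a UNIV w] P_split[of w] Q_nonneg[of w]
    sum_nonneg[of "{b. to_nat b < to_nat a}" "\<lambda>b. P (w @ [b])"] P_nonneg
  unfolding word_interval_def interval_start_snoc by auto

lemma word_interval_snoc_disjoint:
  assumes "a \<noteq> b"
  shows "I (w @ [a]) \<inter> I (w @ [b]) = {}"
proof -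
  have "I (w @ [c]) \<inter> I (w @ [d]) = {}" if "to_nat c < to_nat d" for c d
  proof -
    have "insert c {b. to_nat b < to_nat c} \<subseteq> {b. to_nat b < to_nat d}"
      using that by auto
    from sum_smaller_letters_le[OF this, of w] show ?thesis
      unfolding word_interval_def interval_start_snoc by auto
  qed
  moreover have "to_nat a \<noteq> to_nat b"
    using assms by simp
  ultimately show ?thesis
    by (metis Int_commute linorder_neqE_nat)
qed

lemma word_interval_append_subset: "I (w @ v) \<subseteq> I w"
proof (induction v rule: rev_induct)
  case (snoc a v)
  then show ?case
    using word_interval_snoc_subset[of "w @ v" a] by simp
qed simp

lemma word_interval_subset_Nil: "I w \<subseteq> I []"
  using word_interval_append_subset[of "[]" w] by simp

lemma word_interval_unique:
  assumes "u \<in> I w" "u \<in> I v" "length w = length v"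
  shows "w = v"
  using assms
proof (induction w arbitrary: v rule: rev_induct)
  case (snoc a w)
  obtain v' b where v: "v = v' @ [b]"
    using snoc.prems(3) by (cases v rule: rev_cases) auto
  have "u \<in> I w" "u \<in> I v'"
    using snoc.prems(1,2) word_interval_snoc_subset unfolding v by blast+
  then have "w = v'"
    using snoc.prems(3) v by (intro snoc.IH) auto
  moreover have "a = b"
  proof (rule ccontr)
    assume "a \<noteq> b"
    then show False
      using word_interval_snoc_disjoint[of a b v'] snoc.prems(1,2) by (auto simp: v \<open>w = v'\<close>)
  qed
  ultimately show ?case
    using v by simp
qed simp

lemma interval_word_eqI:
  assumes "length w = Suc n" "u \<in> I w"
  shows "D u n = Some (last w)"
proof -
  have ex: "\<exists>w. length w = Suc n \<and> u \<in> I w"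
    using assms by blast
  then have "length (SOME w. length w = Suc n \<and> u \<in> I w) = Suc n \<and>
      u \<in> I (SOME w. length w = Suc n \<and> u \<in> I w)"
    by (rule someI_ex)
  then have "(SOME w. length w = Suc n \<and> u \<in> I w) = w"
    by (intro word_interval_unique[of u]) (use assms in auto)
  then show ?thesis
    using ex by (simp add: interval_word_def)
qed

lemma interval_word_eq_Some_iff: "D u n = Some a \<longleftrightarrow> (\<exists>w. length w = n \<and> u \<in> I (w @ [a]))"
proof
  assume D: "D u n = Some a"
  then obtain w where w: "length w = Suc n" "u \<in> I w"
    by (auto simp: interval_word_def split: if_splits)
  then have "w = butlast w @ [a]"
    using D interval_word_eqI by (metis append_butlast_last_id list.size(3) nat.distinct(1) option.inject)
  then show "\<exists>w. length w = n \<and> u \<in> I (w @ [a])"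
    using w by (metis diff_Suc_1 length_butlast)
qed (metis interval_word_eqI last_snoc length_append_singleton)

lemma interval_word_eq_None_iff: "D u n = None \<longleftrightarrow> \<not> (\<exists>w. length w = Suc n \<and> u \<in> I w)"
  by (simp add: interval_word_def)

lemma interval_word_in_Ainf: "D u \<in> Ainf"
  unfolding Ainf_def
proof safe
  fix n
  assume "D u n = None"
  then have no_word: "\<not> (\<exists>w. length w = Suc n \<and> u \<in> I w)"
    by (simp add: interval_word_eq_None_iff)
  show "D u (Suc n) = None"
  proof (rule ccontr)
    assume "D u (Suc n) \<noteq> None"
    then obtain w where "length w = Suc (Suc n)" "u \<in> I w"
      by (auto simp: interval_word_eq_None_iff)
    then have "length (take (Suc n) w) = Suc n" "u \<in> I (take (Suc n) w)"
      using word_interval_append_subset[of "take (Suc n) w" "drop (Suc n) w"] by auto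
    then show False
      using no_word by blast
  qed
qed

lemma interval_word_in_cylinder_iff:
  assumes "u \<in> I []"
  shows "D u \<in> wcat w ` Ainf \<longleftrightarrow> u \<in> I w"
proof
  assume "D u \<in> wcat w ` Ainf"
  then have "\<forall>k<length w. D u k = Some (w ! k)"
    unfolding wcat_image_Ainf by simp
  then show "u \<in> I w"
  proof (induction w rule: rev_induct)
    case (snoc a w)
    then have "D u (length w) = Some a"
      by (metis length_append_singleton lessI nth_append_length)
    then obtain v where v: "length v = length w" "u \<in> I (v @ [a])"
      by (auto simp: interval_word_eq_Some_iff)
    have "u \<in> I w"
      using snoc by (simp add: nth_append)
    then have "v = w"
      using v word_interval_snoc_subset word_interval_unique by blast
    then show ?case
      using v by simp
  qed (use assms in simp)
next
  assume u: "u \<in> I w"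
  have "D u k = Some (w ! k)" if "k < length w" for k
  proof -
    have "u \<in> I (take (Suc k) w)"
      using u word_interval_append_subset[of "take (Suc k) w" "drop (Suc k) w"] by auto
    then have "D u k = Some (last (take (Suc k) w))"
      using that by (intro interval_word_eqI) auto
    then show ?thesis
      using that by (simp add: take_Suc_conv_app_nth)
  qed
  then show "D u \<in> wcat w ` Ainf"
    unfolding wcat_image_Ainf using interval_word_in_Ainf by auto
qed

lemma interval_word_eq_fin_word_iff:
  assumes u: "u \<in> I []"
  shows "D u = fin_word w \<longleftrightarrow> u \<in> I w \<and> (\<forall>a. u \<notin> I (w @ [a]))"
proof -
  have "D u = fin_word w \<longleftrightarrow> D u \<in> wcat w ` Ainf \<and> D u (length w) = None"
    unfolding fin_word_eq_iff[OF interval_word_in_Ainf] wcat_image_Ainf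
    using interval_word_in_Ainf by auto
  also have "\<dots> \<longleftrightarrow> u \<in> I w \<and> D u (length w) = None"
    by (simp add: interval_word_in_cylinder_iff[OF u])
  also have "\<dots> \<longleftrightarrow> u \<in> I w \<and> (\<forall>a. u \<notin> I (w @ [a]))"
  proof -
    have "(\<exists>v. length v = Suc (length w) \<and> u \<in> I v) \<longleftrightarrow> (\<exists>a. u \<in> I (w @ [a]))"
      if uw: "u \<in> I w"
    proof
      assume "\<exists>v. length v = Suc (length w) \<and> u \<in> I v"
      then obtain v a where v: "length v = length w" "u \<in> I (v @ [a])"
        by (metis length_append_singleton nat.inject rev_cases length_0_conv nat.distinct(1))
      then have "v = w"
        using uw word_interval_snoc_subset word_interval_unique by blast
      then show "\<exists>a. u \<in> I (w @ [a])"
        using v by blast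
    qed force
    then show ?thesis
      unfolding interval_word_eq_None_iff by blast
  qed
  finally show ?thesis .
qed

lemma interval_word_vimage_cylinder: "D -` (wcat w ` Ainf) \<inter> I [] = I w"
  using interval_word_in_cylinder_iff[of _ w] word_interval_subset_Nil[of w] by auto

lemma interval_word_vimage_fin_word: "D -` {fin_word w} \<inter> I [] = I w - (\<Union>a. I (w @ [a]))"
  using interval_word_eq_fin_word_iff[of _ w] word_interval_subset_Nil[of w] by auto

lemma word_interval_in_sets [measurable]: "I w \<in> sets borel"
  by (simp add: word_interval_def)

lemma measurable_interval_word: "D \<in> restrict_space lborel (I []) \<rightarrow>\<^sub>M Ainf_M"
  unfolding Ainf_M_def
proof (rule measurable_measure_of[OF S_inf_subset_Pow])
  show "D \<in> space (restrict_space lborel (I [])) \<rightarrow> Ainf"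
    using interval_word_in_Ainf by auto
  have cylinder: "I w \<in> sets (restrict_space lborel (I []))" for w
    using word_interval_subset_Nil by (simp add: sets_restrict_space_iff)
  have fin_word: "I w - (\<Union>a. I (w @ [a])) \<in> sets (restrict_space lborel (I []))" for w
    using word_interval_subset_Nil by (auto simp: sets_restrict_space_iff)
  show "D -` X \<inter> space (restrict_space lborel (I [])) \<in> sets (restrict_space lborel (I []))"
    if "X \<in> S_inf" for X
    using that by (cases rule: S_inf_cases)
      (simp_all add: space_restrict_space interval_word_vimage_cylinder interval_word_vimage_fin_word
        cylinder fin_word)
qed

lemma sets_word_measure [simp]: "sets (word_measure P Q) = sets Ainf_M"
  by (simp add: word_measure_def)

lemma space_word_measure [simp]: "space (word_measure P Q) = Ainf"
  using sets_eq_imp_space_eq[OF sets_word_measure] by (simp add: space_Ainf_M)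

lemma emeasure_word_measure:
  assumes "X \<in> sets Ainf_M"
  shows "emeasure (word_measure P Q) X = emeasure lborel (D -` X \<inter> I [])"
  unfolding word_measure_def
  by (simp add: emeasure_distr[OF measurable_interval_word assms] space_restrict_space
      emeasure_restrict_space)

lemma emeasure_word_interval: "emeasure lborel (I w) = P w"
  using P_nonneg[of w] by (simp add: word_interval_def)

lemma emeasure_word_measure_cylinder: "emeasure (word_measure P Q) (wcat w ` Ainf) = P w"
  by (simp add: emeasure_word_measure interval_word_vimage_cylinder emeasure_word_interval)

lemma emeasure_word_measure_fin_word: "emeasure (word_measure P Q) {fin_word w} = Q w"
proof -
  have "emeasure lborel (\<Union>a. I (w @ [a])) = (\<Sum>a\<in>UNIV. emeasure lborel (I (w @ [a])))"
    by (rule sum_emeasure[symmetric]) (auto simp: disjoint_family_on_def word_interval_snoc_disjoint)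
  also have "\<dots> = (\<Sum>a\<in>UNIV. P (w @ [a]))"
    by (simp add: emeasure_word_interval sum_ennreal P_nonneg)
  finally have children: "emeasure lborel (\<Union>a. I (w @ [a])) = (\<Sum>a\<in>UNIV. P (w @ [a]))" .
  have "emeasure lborel (I w - (\<Union>a. I (w @ [a]))) = P w - (\<Sum>a\<in>UNIV. P (w @ [a]))"
    using word_interval_snoc_subset
    by (subst emeasure_Diff) (auto simp: children emeasure_word_interval ennreal_minus sum_nonneg P_nonneg)
  then show ?thesis
    by (simp add: emeasure_word_measure interval_word_vimage_fin_word P_split[of w])
qed

lemma subprob_space_word_measure:
  assumes "P [] \<le> 1"
  shows "subprob_space (word_measure P Q)"
proof (rule subprob_spaceI)
  show "emeasure (word_measure P Q) (space (word_measure P Q)) \<le> 1"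
    using emeasure_word_measure_cylinder[of "[]"] assms by simp
  show "space (word_measure P Q) \<noteq> {}"
    by (metis empty_iff fin_word_in_Ainf space_word_measure)
qed

end

section \<open>Trace semantics of a probabilistic transition system\<close>

lemma space_L_M: "space (L_M M) = Some ` (UNIV \<times> space M) \<union> {None}"
  unfolding L_M_def by (rule space_measure_of) auto

lemma sets_L_M:
  "sets (L_M M) = sigma_sets (Some ` (UNIV \<times> space M) \<union> {None})
     {S. S \<subseteq> Some ` (UNIV \<times> space M) \<union> {None} \<and> Some -` S \<in> sets (count_space UNIV \<Otimes>\<^sub>M M)}"
  unfolding L_M_def by (rule sets_measure_of) auto

lemma Some_letter_in_sets_L_M:
  assumes "S \<in> sets M"
  shows "Some ` ({a} \<times> S) \<in> sets (L_M M)"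
proof -
  have "Some -` Some ` ({a} \<times> S) \<in> sets (count_space UNIV \<Otimes>\<^sub>M M)"
    using assms by (simp add: vimage_image_eq)
  moreover have "Some ` ({a} \<times> S) \<subseteq> Some ` (UNIV \<times> space M) \<union> {None}"
    using sets.sets_into_space[OF assms] by auto
  ultimately show ?thesis
    unfolding sets_L_M by (intro sigma_sets.Basic CollectI conjI)
qed

lemma None_in_sets_L_M: "{None} \<in> sets (L_M M :: ('a \<times> 'x) option measure)"
proof -
  have "Some -` {None} = ({} :: ('a \<times> 'x) set)"
    by auto
  then show ?thesis
    unfolding sets_L_M by (intro sigma_sets.Basic CollectI conjI) auto
qed

definition tau_word :: "'x measure \<Rightarrow> ('x \<Rightarrow> ('a \<times> 'x) option measure) \<Rightarrow> 'a list \<Rightarrow> 'x measure \<Rightarrow> 'x measure"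
  where "tau_word M \<alpha> w m = fold (tau M \<alpha>) w m"

lemma tau_word_Nil [simp]: "tau_word M \<alpha> [] m = m"
  by (simp add: tau_word_def)

lemma tau_word_Cons: "tau_word M \<alpha> (a # w) m = tau_word M \<alpha> w (tau M \<alpha> a m)"
  by (simp add: tau_word_def)

lemma tau_word_snoc: "tau_word M \<alpha> (w @ [a]) m = tau M \<alpha> a (tau_word M \<alpha> w m)"
  by (simp add: tau_word_def)

locale prob_transition_system =
  fixes M :: "'x measure" and \<alpha> :: "'x \<Rightarrow> ('a::finite \<times> 'x) option measure"
  assumes measurable_alpha_prob: "\<alpha> \<in> M \<rightarrow>\<^sub>M prob_algebra (L_M M)"
begin

abbreviation DX :: "'x measure set"
  where "DX \<equiv> space (subprob_algebra M)"

lemma measurable_alpha: "\<alpha> \<in> M \<rightarrow>\<^sub>M subprob_algebra (L_M M)"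
  by (rule measurable_prob_algebraD[OF measurable_alpha_prob])

lemma prob_space_alpha: "x \<in> space M \<Longrightarrow> prob_space (\<alpha> x)"
  using measurable_space[OF measurable_alpha_prob] by (simp add: space_prob_algebra)

lemma sets_alpha: "x \<in> space M \<Longrightarrow> sets (\<alpha> x) = sets (L_M M)"
  using measurable_space[OF measurable_alpha] by (simp add: space_subprob_algebra)

lemma measurable_alpha_from:
  assumes "m \<in> DX"
  shows "\<alpha> \<in> m \<rightarrow>\<^sub>M subprob_algebra (L_M M)"
  using measurable_alpha unfolding measurable_cong_sets[OF sets_in_subprob_algebra[OF assms] refl] .

lemma sets_bind_alpha: "m \<in> DX \<Longrightarrow> sets (m \<bind> \<alpha>) = sets (L_M M)"
  by (rule sets_bind[OF _ space_in_subprob_algebra_nonempty])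
    (simp_all add: sets_alpha space_in_subprob_algebra)

lemma emeasure_bind_alpha:
  "m \<in> DX \<Longrightarrow> A \<in> sets (L_M M) \<Longrightarrow> emeasure (m \<bind> \<alpha>) A = (\<integral>\<^sup>+x. emeasure (\<alpha> x) A \<partial>m)"
  by (rule emeasure_bind[OF space_in_subprob_algebra_nonempty measurable_alpha_from])

lemma alpha1_eq_emeasure_bind: "m \<in> DX \<Longrightarrow> alpha1 M \<alpha> m = emeasure (m \<bind> \<alpha>) (space (L_M M))"
  by (simp add: alpha1_def emeasure_bind_alpha)

lemma alphaStar_eq_emeasure_bind: "m \<in> DX \<Longrightarrow> alphaStar M \<alpha> m = emeasure (m \<bind> \<alpha>) {None}"
  by (simp add: alphaStar_def emeasure_bind_alpha None_in_sets_L_M)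

lemma emeasure_alpha_space: "x \<in> space M \<Longrightarrow> emeasure (\<alpha> x) (space (L_M M)) = 1"
  using prob_space.emeasure_space_1[OF prob_space_alpha] sets_eq_imp_space_eq[OF sets_alpha] by metis

lemma alpha1_eq_emeasure_space:
  assumes "m \<in> DX"
  shows "alpha1 M \<alpha> m = emeasure m (space M)"
proof -
  have "alpha1 M \<alpha> m = (\<integral>\<^sup>+x. 1 \<partial>m)"
    unfolding alpha1_def using assms
    by (intro nn_integral_cong) (simp add: emeasure_alpha_space space_in_subprob_algebra)
  then show ?thesis
    using assms by (simp add: space_in_subprob_algebra)
qed

lemma sets_tau [simp]: "sets (tau M \<alpha> a m) = sets M"
  by (simp add: tau_def sets.sets_measure_of_eq)

lemma space_tau [simp]: "space (tau M \<alpha> a m) = space M"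
  by (simp add: tau_def)

lemma emeasure_tau:
  assumes "m \<in> DX" "S \<in> sets M"
  shows "emeasure (tau M \<alpha> a m) S = (\<integral>\<^sup>+x. emeasure (\<alpha> x) (Some ` ({a} \<times> S)) \<partial>m)"
proof -
  have image: "(\<lambda>x. Some (a, x)) ` S' = Some ` ({a} \<times> S')" for S'
    by auto
  show ?thesis
    unfolding tau_def
  proof (rule emeasure_measure_of_image[where N = "m \<bind> \<alpha>" and f = "\<lambda>x. Some (a, x)"])
    show "inj_on (\<lambda>x. Some (a, x)) (space M)"
      by (simp add: inj_on_def)
    show "(\<lambda>x. Some (a, x)) ` S' \<in> sets (m \<bind> \<alpha>)" if "S' \<in> sets M" for S'
      using that assms(1) by (simp add: image sets_bind_alpha Some_letter_in_sets_L_M)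
    show "(\<integral>\<^sup>+x. emeasure (\<alpha> x) (Some ` ({a} \<times> S')) \<partial>m) =
        emeasure (m \<bind> \<alpha>) ((\<lambda>x. Some (a, x)) ` S')" if "S' \<in> sets M" for S'
      using that assms(1) by (simp add: image emeasure_bind_alpha Some_letter_in_sets_L_M)
  qed (use assms in simp)
qed

lemma measurable_emeasure_alpha:
  "A \<in> sets (L_M M) \<Longrightarrow> (\<lambda>x. emeasure (\<alpha> x) A) \<in> borel_measurable M"
  by (rule measurable_compose[OF measurable_alpha measurable_emeasure_subprob_algebra])

lemma emeasure_tau_eq_bind:
  "m \<in> DX \<Longrightarrow> S \<in> sets M \<Longrightarrow> emeasure (tau M \<alpha> a m) S = emeasure (m \<bind> \<alpha>) (Some ` ({a} \<times> S))"
  by (simp add: emeasure_tau emeasure_bind_alpha Some_letter_in_sets_L_M)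

lemma tau_in_DX:
  assumes m: "m \<in> DX"
  shows "tau M \<alpha> a m \<in> DX"
proof -
  have "subprob_space (m \<bind> \<alpha>)"
    using m measurable_alpha_from[OF m] by (intro subprob_space_bind) (simp_all add: space_subprob_algebra)
  then have "emeasure (tau M \<alpha> a m) (space M) \<le> 1"
    using m by (simp add: emeasure_tau_eq_bind subprob_space.subprob_emeasure_le_1)
  moreover have "space M \<noteq> {}"
    using space_in_subprob_algebra_nonempty[OF m] space_in_subprob_algebra[OF m] by simp
  ultimately show ?thesis
    by (auto simp: space_subprob_algebra intro: subprob_spaceI)
qed

lemma measurable_tau: "tau M \<alpha> a \<in> subprob_algebra M \<rightarrow>\<^sub>M subprob_algebra M"
proof (rule measurable_subprob_algebra)
  fix A
  assume A: "A \<in> sets M"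
  have "(\<lambda>m. \<integral>\<^sup>+x. emeasure (\<alpha> x) (Some ` ({a} \<times> A)) \<partial>m) \<in> borel_measurable (subprob_algebra M)"
    using measurable_alpha A Some_letter_in_sets_L_M by measurable
  then show "(\<lambda>m. emeasure (tau M \<alpha> a m) A) \<in> borel_measurable (subprob_algebra M)"
    using A by (subst measurable_cong[where g = "\<lambda>m. \<integral>\<^sup>+x. _ x m \<partial>m"]) (simp_all add: emeasure_tau)
qed (use tau_in_DX in \<open>simp_all add: space_subprob_algebra\<close>)

lemma tau_eq_bind:
  assumes m: "m \<in> DX"
  shows "tau M \<alpha> a m = m \<bind> (\<lambda>x. tau M \<alpha> a (return M x))"
proof (rule measure_eqI)
  have K: "(\<lambda>x. tau M \<alpha> a (return M x)) \<in> m \<rightarrow>\<^sub>M subprob_algebra M"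
    using measurable_compose[OF return_measurable measurable_tau]
    by (simp add: measurable_cong_sets[OF sets_in_subprob_algebra[OF m] refl])
  then show "sets (tau M \<alpha> a m) = sets (m \<bind> (\<lambda>x. tau M \<alpha> a (return M x)))"
    using sets_bind[OF sets_kernel[OF K] space_in_subprob_algebra_nonempty[OF m]] by simp
  fix S
  assume "S \<in> sets (tau M \<alpha> a m)"
  then have S: "S \<in> sets M"
    by simp
  have "emeasure (m \<bind> (\<lambda>x. tau M \<alpha> a (return M x))) S =
      (\<integral>\<^sup>+x. emeasure (tau M \<alpha> a (return M x)) S \<partial>m)"
    by (rule emeasure_bind[OF space_in_subprob_algebra_nonempty[OF m] K S])
  also have "\<dots> = (\<integral>\<^sup>+x. emeasure (\<alpha> x) (Some ` ({a} \<times> S)) \<partial>m)"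
    using m S
    by (intro nn_integral_cong)
      (simp add: emeasure_tau space_in_subprob_algebra subprob_space_return space_subprob_algebra
        nn_integral_return measurable_emeasure_alpha Some_letter_in_sets_L_M)
  finally show "emeasure (tau M \<alpha> a m) S = emeasure (m \<bind> (\<lambda>x. tau M \<alpha> a (return M x))) S"
    using m S by (simp add: emeasure_tau)
qed

lemma alpha1_decomposition:
  assumes m: "m \<in> DX"
  shows "alpha1 M \<alpha> m = alphaStar M \<alpha> m + (\<Sum>a\<in>UNIV. alpha1 M \<alpha> (tau M \<alpha> a m))"
proof -
  define E :: "'a \<Rightarrow> ('a \<times> 'x) option set" where "E a = Some ` ({a} \<times> space M)" for a
  have E_sets: "E a \<in> sets (m \<bind> \<alpha>)" for a
    using m by (simp add: E_def sets_bind_alpha Some_letter_in_sets_L_M)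
  have "(\<Sum>a\<in>UNIV. alpha1 M \<alpha> (tau M \<alpha> a m)) = (\<Sum>a\<in>UNIV. emeasure (m \<bind> \<alpha>) (E a))"
    using m by (simp add: E_def alpha1_eq_emeasure_space tau_in_DX emeasure_tau_eq_bind)
  also have "\<dots> = emeasure (m \<bind> \<alpha>) (\<Union>a. E a)"
    using E_sets by (intro sum_emeasure) (auto simp: E_def disjoint_family_on_def)
  finally have "alphaStar M \<alpha> m + (\<Sum>a\<in>UNIV. alpha1 M \<alpha> (tau M \<alpha> a m)) =
      emeasure (m \<bind> \<alpha>) {None} + emeasure (m \<bind> \<alpha>) (\<Union>a. E a)"
    using m by (simp add: alphaStar_eq_emeasure_bind)
  also have "\<dots> = emeasure (m \<bind> \<alpha>) ({None} \<union> (\<Union>a. E a))"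
    using m E_sets None_in_sets_L_M
    by (intro plus_emeasure) (auto simp: sets_bind_alpha E_def)
  also have "{None} \<union> (\<Union>a. E a) = space (L_M M)"
    by (auto simp: E_def space_L_M)
  finally show ?thesis
    using m by (simp add: alpha1_eq_emeasure_bind)
qed

lemma tau_word_in_DX: "m \<in> DX \<Longrightarrow> tau_word M \<alpha> w m \<in> DX"
  by (induction w arbitrary: m) (simp_all add: tau_word_Cons tau_in_DX)

lemma measurable_tau_word: "tau_word M \<alpha> w \<in> subprob_algebra M \<rightarrow>\<^sub>M subprob_algebra M"
proof (induction w rule: rev_induct)
  case (snoc a w)
  then show ?case
    unfolding tau_word_snoc[abs_def] by (rule measurable_compose[OF _ measurable_tau])
qed (simp add: tau_word_def[abs_def])

lemma tau_word_eq_bind: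
  assumes "m \<in> DX"
  shows "tau_word M \<alpha> w m = m \<bind> (\<lambda>x. tau_word M \<alpha> w (return M x))"
  using assms
proof (induction w arbitrary: m)
  case Nil
  then show ?case
    by (simp add: bind_return'' sets_in_subprob_algebra)
next
  case (Cons a w)
  have m: "m \<in> DX" by fact
  have sets_m: "sets m = sets M"
    using sets_in_subprob_algebra[OF m] .
  let ?T = "\<lambda>x. tau M \<alpha> a (return M x)" and ?K = "\<lambda>y. tau_word M \<alpha> w (return M y)"
  have T: "?T \<in> m \<rightarrow>\<^sub>M subprob_algebra M"
    unfolding measurable_cong_sets[OF sets_m refl]
    by (rule measurable_compose[OF return_measurable measurable_tau])
  have K: "?K \<in> M \<rightarrow>\<^sub>M subprob_algebra M"
    by (rule measurable_compose[OF return_measurable measurable_tau_word])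
  have return_in_DX: "x \<in> space m \<Longrightarrow> return M x \<in> DX" for x
    using m by (simp add: space_in_subprob_algebra space_subprob_algebra subprob_space_return)
  have "tau_word M \<alpha> (a # w) m = tau M \<alpha> a m \<bind> ?K"
    using m by (simp add: tau_word_Cons Cons.IH tau_in_DX)
  also have "\<dots> = (m \<bind> ?T) \<bind> ?K"
    using m by (simp add: tau_eq_bind)
  also have "\<dots> = m \<bind> (\<lambda>x. ?T x \<bind> ?K)"
    by (rule bind_assoc[OF T K])
  also have "\<dots> = m \<bind> (\<lambda>x. tau_word M \<alpha> (a # w) (return M x))"
    using return_in_DX by (intro bind_cong) (simp_all add: tau_word_Cons Cons.IH tau_in_DX)
  finally show ?case .
qed

definition prefix_mass :: "'x measure \<Rightarrow> 'a list \<Rightarrow> ennreal"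
  where "prefix_mass m w = emeasure (tau_word M \<alpha> w m) (space M)"

definition word_mass :: "'x measure \<Rightarrow> 'a list \<Rightarrow> ennreal"
  where "word_mass m w = alphaStar M \<alpha> (tau_word M \<alpha> w m)"

lemma prefix_mass_Cons: "prefix_mass m (a # w) = prefix_mass (tau M \<alpha> a m) w"
  by (simp add: prefix_mass_def tau_word_Cons)

lemma word_mass_Cons: "word_mass m (a # w) = word_mass (tau M \<alpha> a m) w"
  by (simp add: word_mass_def tau_word_Cons)

lemma prefix_mass_split:
  assumes "m \<in> DX"
  shows "prefix_mass m w = word_mass m w + (\<Sum>a\<in>UNIV. prefix_mass m (w @ [a]))"
  using alpha1_decomposition[OF tau_word_in_DX[OF assms, of w]] assms
  by (simp add: prefix_mass_def word_mass_def tau_word_snoc alpha1_eq_emeasure_space tau_word_in_DX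
      tau_in_DX)

lemma prefix_mass_le_1: "m \<in> DX \<Longrightarrow> prefix_mass m w \<le> 1"
  using tau_word_in_DX[of m w] subprob_space.emeasure_space_le_1[of "tau_word M \<alpha> w m"]
  by (simp add: prefix_mass_def space_subprob_algebra space_in_subprob_algebra)

lemma word_mass_le_prefix_mass: "m \<in> DX \<Longrightarrow> word_mass m w \<le> prefix_mass m w"
  using prefix_mass_split[of m w] by (simp add: le_iff_add)

lemma measurable_prefix_mass: "(\<lambda>m. prefix_mass m w) \<in> borel_measurable (subprob_algebra M)"
  unfolding prefix_mass_def
  by (rule measurable_compose[OF measurable_tau_word measurable_emeasure_subprob_algebra[OF sets.top]])

lemma measurable_word_mass: "(\<lambda>m. word_mass m w) \<in> borel_measurable (subprob_algebra M)"
  unfolding word_mass_def alphaStar_def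
  by (rule measurable_compose[OF measurable_tau_word nn_integral_measurable_subprob_algebra])
    (rule measurable_emeasure_alpha[OF None_in_sets_L_M])

lemma return_in_DX: "x \<in> space M \<Longrightarrow> return M x \<in> DX"
  by (simp add: space_subprob_algebra subprob_space_return)

lemma measurable_tau_word_return: "(\<lambda>x. tau_word M \<alpha> w (return M x)) \<in> m \<rightarrow>\<^sub>M subprob_algebra M"
  if "m \<in> DX"
  unfolding measurable_cong_sets[OF sets_in_subprob_algebra[OF that] refl]
  by (rule measurable_compose[OF return_measurable measurable_tau_word])

lemma prefix_mass_eq_integral:
  assumes m: "m \<in> DX"
  shows "prefix_mass m w = (\<integral>\<^sup>+x. prefix_mass (return M x) w \<partial>m)"
  unfolding prefix_mass_def
  by (subst tau_word_eq_bind[OF m], rule emeasure_bind[where N = M])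
    (simp_all add: space_in_subprob_algebra_nonempty[OF m] measurable_tau_word_return[OF m])

lemma word_mass_eq_integral:
  assumes m: "m \<in> DX"
  shows "word_mass m w = (\<integral>\<^sup>+x. word_mass (return M x) w \<partial>m)"
  unfolding word_mass_def alphaStar_def
  by (subst tau_word_eq_bind[OF m], rule nn_integral_bind[where B = M])
    (simp_all add: measurable_emeasure_alpha None_in_sets_L_M measurable_tau_word_return[OF m])

definition trace_measure :: "'x measure \<Rightarrow> 'a inf_word measure"
  where "trace_measure m = word_measure (\<lambda>w. enn2real (prefix_mass m w)) (\<lambda>w. enn2real (word_mass m w))"

lemma prefix_mass_finite: "m \<in> DX \<Longrightarrow> prefix_mass m w < \<top>"
  using prefix_mass_le_1[of m w] by (simp add: order_le_less_trans)

lemma word_mass_finite: "m \<in> DX \<Longrightarrow> word_mass m w < \<top>"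
  using word_mass_le_prefix_mass[of m w] prefix_mass_finite[of m w] by (simp add: order_le_less_trans)

lemma word_masses_trace:
  assumes m: "m \<in> DX"
  shows "word_masses (\<lambda>w. enn2real (prefix_mass m w)) (\<lambda>w. enn2real (word_mass m w))"
proof
  fix w
  show "enn2real (prefix_mass m w) =
      enn2real (word_mass m w) + (\<Sum>a\<in>UNIV. enn2real (prefix_mass m (w @ [a])))"
    using prefix_mass_split[OF m, of w] word_mass_finite[OF m] prefix_mass_finite[OF m]
    by (simp add: enn2real_plus enn2real_sum ennreal_sum_less_top)
qed simp_all

lemma emeasure_trace_measure_cylinder:
  assumes m: "m \<in> DX"
  shows "emeasure (trace_measure m) (wcat w ` Ainf) = prefix_mass m w"
proof -
  interpret word_masses "\<lambda>w. enn2real (prefix_mass m w)" "\<lambda>w. enn2real (word_mass m w)"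
    by (rule word_masses_trace[OF m])
  show ?thesis
    using prefix_mass_finite[OF m] by (simp add: trace_measure_def emeasure_word_measure_cylinder)
qed

lemma emeasure_trace_measure_fin_word:
  assumes m: "m \<in> DX"
  shows "emeasure (trace_measure m) {fin_word w} = word_mass m w"
proof -
  interpret word_masses "\<lambda>w. enn2real (prefix_mass m w)" "\<lambda>w. enn2real (word_mass m w)"
    by (rule word_masses_trace[OF m])
  show ?thesis
    using word_mass_finite[OF m] by (simp add: trace_measure_def emeasure_word_measure_fin_word)
qed

lemma trace_measure_in_space:
  assumes m: "m \<in> DX"
  shows "trace_measure m \<in> space (subprob_algebra Ainf_M)"
proof -
  interpret word_masses "\<lambda>w. enn2real (prefix_mass m w)" "\<lambda>w. enn2real (word_mass m w)"
    by (rule word_masses_trace[OF m])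
  have "enn2real (prefix_mass m []) \<le> 1"
    using prefix_mass_le_1[OF m] by (simp add: enn2real_leI)
  then show ?thesis
    by (simp add: trace_measure_def space_subprob_algebra subprob_space_word_measure)
qed

lemma measurable_trace_measure: "trace_measure \<in> subprob_algebra M \<rightarrow>\<^sub>M subprob_algebra Ainf_M"
proof (rule measurable_subprob_algebra_generated[OF sets_Ainf_M Int_stable_S_inf S_inf_subset_Pow])
  fix X :: "'a inf_word set"
  assume "X \<in> S_inf"
  then show "(\<lambda>m. emeasure (trace_measure m) X) \<in> borel_measurable (subprob_algebra M)"
  proof (cases rule: S_inf_cases)
    case (fin_word w)
    then show ?thesis
      using measurable_word_mass
      by (simp add: measurable_cong[OF emeasure_trace_measure_fin_word])
  next
    case (cylinder w)
    then show ?thesis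
      using measurable_prefix_mass
      by (simp add: measurable_cong[OF emeasure_trace_measure_cylinder])
  qed simp
next
  show "(\<lambda>m. emeasure (trace_measure m) Ainf) \<in> borel_measurable (subprob_algebra M)"
    using measurable_prefix_mass[of "[]"]
    by (simp add: measurable_cong[OF emeasure_trace_measure_cylinder[of _ "[]", simplified]])
qed (use trace_measure_in_space in \<open>simp_all add: space_subprob_algebra\<close>)

abbreviation trace_morphism :: "('x measure \<Rightarrow> 'a inf_word measure) \<Rightarrow> bool"
  where "trace_morphism h \<equiv>
    is_F_morphism (subprob_algebra M) (alpha_sharp M \<alpha>) (subprob_algebra Ainf_M) Pi_coalg h"

lemma Pi_coalg_eq_F_map_iff:
  "Pi_coalg (h m) = F_map h (alpha_sharp M \<alpha> m) \<longleftrightarrow>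
    emeasure (h m) Ainf = alpha1 M \<alpha> m \<and> emeasure (h m) {fin_word []} = alphaStar M \<alpha> m \<and>
    (\<forall>a. word_deriv (h m) a = h (tau M \<alpha> a m))"
  unfolding Pi_coalg_def F_map_def alpha_sharp_def by (auto simp: fun_eq_iff)

lemma trace_morphism_sets:
  assumes "trace_morphism h" "m \<in> DX"
  shows "sets (h m) = sets Ainf_M"
proof -
  have "h \<in> subprob_algebra M \<rightarrow>\<^sub>M subprob_algebra Ainf_M"
    using assms(1) by (simp add: is_F_morphism_def)
  from measurable_space[OF this assms(2)] show ?thesis
    by (simp add: space_subprob_algebra)
qed

lemma trace_morphismD:
  assumes "trace_morphism h" "m \<in> DX"
  shows "emeasure (h m) Ainf = alpha1 M \<alpha> m" and "emeasure (h m) {fin_word []} = alphaStar M \<alpha> m"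
    and "word_deriv (h m) a = h (tau M \<alpha> a m)"
  using assms unfolding is_F_morphism_def Pi_coalg_eq_F_map_iff by blast+

lemma trace_measure_morphism: "trace_morphism trace_measure"
  unfolding is_F_morphism_def Pi_coalg_eq_F_map_iff
proof (intro conjI ballI allI measurable_trace_measure)
  fix m a
  assume m: "m \<in> DX"
  then have sets_m: "sets (trace_measure m) = sets Ainf_M"
    using trace_measure_in_space by (simp add: space_subprob_algebra)
  show "emeasure (trace_measure m) Ainf = alpha1 M \<alpha> m"
    using emeasure_trace_measure_cylinder[OF m, of "[]"] m
    by (simp add: prefix_mass_def alpha1_eq_emeasure_space)
  show "emeasure (trace_measure m) {fin_word []} = alphaStar M \<alpha> m"
    using emeasure_trace_measure_fin_word[OF m, of "[]"] by (simp add: word_mass_def)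
  show "word_deriv (trace_measure m) a = trace_measure (tau M \<alpha> a m)"
  proof (rule Ainf_measure_eqI)
    show "sets (trace_measure (tau M \<alpha> a m)) = sets Ainf_M"
      using trace_measure_in_space[OF tau_in_DX[OF m]] by (simp add: space_subprob_algebra)
    have "emeasure (word_deriv (trace_measure m) a) Ainf = prefix_mass m [a]"
      using emeasure_trace_measure_cylinder[OF m, of "[a]"]
      by (simp add: emeasure_word_deriv[OF sets_m])
    then show "emeasure (word_deriv (trace_measure m) a) Ainf \<noteq> \<infinity>"
      using prefix_mass_finite[OF m, of "[a]"] by simp
    fix X :: "'a inf_word set"
    assume "X \<in> S_inf"
    then show "emeasure (word_deriv (trace_measure m) a) X = emeasure (trace_measure (tau M \<alpha> a m)) X"
    proof (cases rule: S_inf_cases)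
      case (fin_word w)
      have "emeasure (word_deriv (trace_measure m) a) X = emeasure (trace_measure m) {fin_word (a # w)}"
        by (simp add: fin_word emeasure_word_deriv[OF sets_m] wcat_fin_word)
      then show ?thesis
        using m by (simp add: fin_word emeasure_trace_measure_fin_word word_mass_Cons tau_in_DX)
    next
      case (cylinder w)
      have "emeasure (word_deriv (trace_measure m) a) X = emeasure (trace_measure m) (wcat (a # w) ` Ainf)"
        unfolding cylinder emeasure_word_deriv[OF sets_m cylinder_in_sets] wcat_Cons_image[of a w Ainf] ..
      then show ?thesis
        using m by (simp add: cylinder emeasure_trace_measure_cylinder prefix_mass_Cons tau_in_DX)
    qed simp
  qed simp
qed

lemma trace_morphism_emeasure_wcat:
  assumes h: "trace_morphism h" and m: "m \<in> DX" and X: "X \<in> sets Ainf_M"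
  shows "emeasure (h m) (wcat w ` X) = emeasure (h (tau_word M \<alpha> w m)) X"
  using m
proof (induction w arbitrary: m)
  case (Cons a w)
  have "emeasure (h m) (wcat (a # w) ` X) = emeasure (word_deriv (h m) a) (wcat w ` X)"
    using trace_morphism_sets[OF h Cons.prems] X
    unfolding wcat_Cons_image[of a w X] by (intro emeasure_word_deriv[symmetric] wcat_image_in_sets)
  also have "\<dots> = emeasure (h (tau M \<alpha> a m)) (wcat w ` X)"
    using h Cons.prems by (simp add: trace_morphismD)
  also have "\<dots> = emeasure (h (tau_word M \<alpha> (a # w) m)) X"
    unfolding tau_word_Cons by (rule Cons.IH[OF tau_in_DX[OF Cons.prems]])
  finally show ?case .
qed simp

lemma trace_morphism_emeasure_cylinder:
  assumes "trace_morphism h" "m \<in> DX"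
  shows "emeasure (h m) (wcat w ` Ainf) = prefix_mass m w"
  using assms trace_morphism_emeasure_wcat[OF assms Ainf_in_sets, of w]
  by (simp add: trace_morphismD tau_word_in_DX alpha1_eq_emeasure_space prefix_mass_def)

lemma trace_morphism_emeasure_fin_word:
  assumes "trace_morphism h" "m \<in> DX"
  shows "emeasure (h m) {fin_word w} = word_mass m w"
  using assms trace_morphism_emeasure_wcat[OF assms fin_word_in_sets, of w "[]"]
  by (simp add: trace_morphismD tau_word_in_DX wcat_fin_word word_mass_def)

lemma trace_morphism_unique:
  assumes h: "trace_morphism h" and h': "trace_morphism h'" and m: "m \<in> DX"
  shows "h m = h' m"
proof (rule Ainf_measure_eqI)
  show "sets (h m) = sets Ainf_M" "sets (h' m) = sets Ainf_M"
    using trace_morphism_sets h h' m by blast+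
  show "emeasure (h m) Ainf \<noteq> \<infinity>"
    using trace_morphism_emeasure_cylinder[OF h m, of "[]"] prefix_mass_finite[OF m, of "[]"] by simp
  fix X :: "'a inf_word set"
  assume "X \<in> S_inf"
  then show "emeasure (h m) X = emeasure (h' m) X"
    by (cases rule: S_inf_cases)
      (simp_all add: trace_morphism_emeasure_cylinder trace_morphism_emeasure_fin_word h h' m)
qed

lemma trace_morphism_emeasure_eq_integral:
  assumes h: "trace_morphism h" and m: "m \<in> DX" and X: "X \<in> S_inf"
  shows "emeasure (h m) X = (\<integral>\<^sup>+x. emeasure (h (return M x)) X \<partial>m)"
proof -
  have return: "x \<in> space m \<Longrightarrow> return M x \<in> DX" for x
    using m by (simp add: space_in_subprob_algebra return_in_DX)
  from X show ?thesis
  proof (cases rule: S_inf_cases)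
    case (fin_word w)
    then show ?thesis
      using return by (simp add: trace_morphism_emeasure_fin_word[OF h] m word_mass_eq_integral[OF m]
          cong: nn_integral_cong)
  next
    case (cylinder w)
    then show ?thesis
      using return by (simp add: trace_morphism_emeasure_cylinder[OF h] m prefix_mass_eq_integral[OF m]
          cong: nn_integral_cong)
  qed simp
qed

end

theorem mainTheorem12:
  fixes M :: "'x measure" and \<alpha> :: "'x \<Rightarrow> ('a::finite \<times> 'x) option measure"
  assumes "\<alpha> \<in> M \<rightarrow>\<^sub>M prob_algebra (L_M M)"
  shows "(\<forall>m\<in>space (subprob_algebra M).
            alpha1 M \<alpha> m = alphaStar M \<alpha> m + (\<Sum>a\<in>UNIV. alpha1 M \<alpha> (tau M \<alpha> a m)))
    \<and> (\<exists>h. is_F_morphism (subprob_algebra M) (alpha_sharp M \<alpha>) (subprob_algebra Ainf_M) Pi_coalg h)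
    \<and> (\<forall>h h'. is_F_morphism (subprob_algebra M) (alpha_sharp M \<alpha>) (subprob_algebra Ainf_M) Pi_coalg h
         \<longrightarrow> is_F_morphism (subprob_algebra M) (alpha_sharp M \<alpha>) (subprob_algebra Ainf_M) Pi_coalg h'
         \<longrightarrow> (\<forall>m\<in>space (subprob_algebra M). h m = h' m))
    \<and> (\<forall>h. is_F_morphism (subprob_algebra M) (alpha_sharp M \<alpha>) (subprob_algebra Ainf_M) Pi_coalg h
         \<longrightarrow> (\<forall>m\<in>space (subprob_algebra M). \<forall>S\<in>(S_inf :: 'a inf_word set set).
               emeasure (h m) S = (\<integral>\<^sup>+ x. emeasure (h (return M x)) S \<partial>m)))"
proof -
  interpret prob_transition_system M \<alpha>
    by unfold_locales (rule assms)
  show ?thesis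
    using alpha1_decomposition trace_measure_morphism trace_morphism_unique
      trace_morphism_emeasure_eq_integral
    by blast
qed

end
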